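(* Let $X_1,X_2$ be forests and $A\subset X=X_1\times X_2$. Let $A_1$ be the set of points $x\in X$ such that $x=y\vee z$ for some $c$-comparable $y,z\in A$, and let $A_2$ be the set of $t=(t_1,t_2)\in X$ such that $t_1\le x_1$ and $t_2\le x_2$ for some $x=(x_1,x_2)\in A_1$. Then $A_2$ equals the c.h-envelope $\widehat A$ of $A$.
   Context: A partially ordered set $Y$ is a forest if for every $y_0\in Y$ the set $\{y\ge y_0\}$ is finite and totally ordered. For forests $X_1,\dots,X_n$ and $X=X_1\times\cdots\times X_n$, write $y\le x$ if $y_i\le x_i$ for all $i$. A subset $A\subset X$ is hereditary if $x\in A$ and $y\le x$ imply $y\in A$. Points $x,y\in X$ are $c$-comparable if for each $i$, $x_i$ and $y_i$ are comparable; then $x\vee y=(\max(x_i,y_i))_i$. $A$ is concave if $x\vee y\in A$ whenever $x,y\in A$ are $c$-comparable. The c.h-envelope $\widehat A$ of $A$ is the smallest concave hereditary subset of $X$ containing $A$. *)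

theory Defs
  imports Main
begin

definition forest :: "'a set \<Rightarrow> ('a \<Rightarrow> 'a \<Rightarrow> bool) \<Rightarrow> bool" where
  "forest Y le \<longleftrightarrow>
     (\<forall>x\<in>Y. le x x) \<and>
     (\<forall>x\<in>Y. \<forall>y\<in>Y. \<forall>z\<in>Y. le x y \<and> le y z \<longrightarrow> le x z) \<and>
     (\<forall>x\<in>Y. \<forall>y\<in>Y. le x y \<and> le y x \<longrightarrow> x = y) \<and>
     (\<forall>y0\<in>Y. finite {y\<in>Y. le y0 y} \<and>
        (\<forall>y\<in>{y\<in>Y. le y0 y}. \<forall>z\<in>{y\<in>Y. le y0 y}. le y z \<or> le z y))"

definition prod_le :: "('a \<Rightarrow> 'a \<Rightarrow> bool) \<Rightarrow> ('b \<Rightarrow> 'b \<Rightarrow> bool) \<Rightarrow> 'a \<times> 'b \<Rightarrow> 'a \<times> 'b \<Rightarrow> bool" where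
  "prod_le le1 le2 y x \<longleftrightarrow> le1 (fst y) (fst x) \<and> le2 (snd y) (snd x)"

definition comparable :: "('a \<Rightarrow> 'a \<Rightarrow> bool) \<Rightarrow> 'a \<Rightarrow> 'a \<Rightarrow> bool" where
  "comparable le a b \<longleftrightarrow> le a b \<or> le b a"

definition c_comparable :: "('a \<Rightarrow> 'a \<Rightarrow> bool) \<Rightarrow> ('b \<Rightarrow> 'b \<Rightarrow> bool) \<Rightarrow> 'a \<times> 'b \<Rightarrow> 'a \<times> 'b \<Rightarrow> bool" where
  "c_comparable le1 le2 x y \<longleftrightarrow> comparable le1 (fst x) (fst y) \<and> comparable le2 (snd x) (snd y)"

definition omax :: "('a \<Rightarrow> 'a \<Rightarrow> bool) \<Rightarrow> 'a \<Rightarrow> 'a \<Rightarrow> 'a" where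
  "omax le a b = (if le a b then b else a)"

definition cjoin :: "('a \<Rightarrow> 'a \<Rightarrow> bool) \<Rightarrow> ('b \<Rightarrow> 'b \<Rightarrow> bool) \<Rightarrow> 'a \<times> 'b \<Rightarrow> 'a \<times> 'b \<Rightarrow> 'a \<times> 'b" where
  "cjoin le1 le2 x y = (omax le1 (fst x) (fst y), omax le2 (snd x) (snd y))"

definition hereditary :: "('a \<times> 'b) set \<Rightarrow> ('a \<Rightarrow> 'a \<Rightarrow> bool) \<Rightarrow> ('b \<Rightarrow> 'b \<Rightarrow> bool) \<Rightarrow> ('a \<times> 'b) set \<Rightarrow> bool" where
  "hereditary X le1 le2 A \<longleftrightarrow> A \<subseteq> X \<and> (\<forall>x\<in>A. \<forall>y\<in>X. prod_le le1 le2 y x \<longrightarrow> y \<in> A)"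

definition concave :: "('a \<Rightarrow> 'a \<Rightarrow> bool) \<Rightarrow> ('b \<Rightarrow> 'b \<Rightarrow> bool) \<Rightarrow> ('a \<times> 'b) set \<Rightarrow> bool" where
  "concave le1 le2 A \<longleftrightarrow> (\<forall>x\<in>A. \<forall>y\<in>A. c_comparable le1 le2 x y \<longrightarrow> cjoin le1 le2 x y \<in> A)"

definition ch_envelope :: "('a \<times> 'b) set \<Rightarrow> ('a \<Rightarrow> 'a \<Rightarrow> bool) \<Rightarrow> ('b \<Rightarrow> 'b \<Rightarrow> bool) \<Rightarrow> ('a \<times> 'b) set \<Rightarrow> ('a \<times> 'b) set" where
  "ch_envelope X le1 le2 A = \<Inter>{B. B \<subseteq> X \<and> hereditary X le1 le2 B \<and> concave le1 le2 B \<and> A \<subseteq> B}"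

end

theory Submission
  imports Defs
begin

text \<open>Every concave hereditary set containing \<open>A\<close> contains \<open>A1\<close> and hence \<open>A2\<close>; since
  \<open>A2\<close> is obviously hereditary and contains \<open>A\<close>, the point is that \<open>A2\<close> is concave.
  In a forest the elements above a point form a chain, so points \<open>x, x' \<in> A1\<close> lying above
  c-comparable points \<open>t, s\<close> are again c-comparable. Writing \<open>x = y \<or> z\<close> and
  \<open>x' = y' \<or> z'\<close>, in each coordinate the larger of the coordinates of \<open>x\<close> and \<open>x'\<close> is
  that of one of \<open>y, z, y', z'\<close> and dominates the other three. If \<open>p\<close> is greatest in the first
  and \<open>q\<close> in the second coordinate, then \<open>p, q\<close> are c-comparable and \<open>p \<or> q \<in> A1\<close> lies
  above both \<open>x\<close> and \<open>x'\<close>, hence above \<open>t \<or> s\<close>.\<close>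

definition cjoins ::
    "('a \<times> 'b) set \<Rightarrow> ('a \<Rightarrow> 'a \<Rightarrow> bool) \<Rightarrow> ('b \<Rightarrow> 'b \<Rightarrow> bool) \<Rightarrow> ('a \<times> 'b) set \<Rightarrow> ('a \<times> 'b) set"
  where "cjoins X le1 le2 A =
    {x \<in> X. \<exists>y\<in>A. \<exists>z\<in>A. c_comparable le1 le2 y z \<and> x = cjoin le1 le2 y z}"

definition lower_closure ::
    "('a \<times> 'b) set \<Rightarrow> ('a \<Rightarrow> 'a \<Rightarrow> bool) \<Rightarrow> ('b \<Rightarrow> 'b \<Rightarrow> bool) \<Rightarrow> ('a \<times> 'b) set \<Rightarrow> ('a \<times> 'b) set"
  where "lower_closure X le1 le2 B = {t \<in> X. \<exists>x\<in>B. prod_le le1 le2 t x}"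

lemma forest_refl: "forest Y le \<Longrightarrow> x \<in> Y \<Longrightarrow> le x x"
  unfolding forest_def by blast

lemma forest_trans: "forest Y le \<Longrightarrow> x \<in> Y \<Longrightarrow> y \<in> Y \<Longrightarrow> z \<in> Y \<Longrightarrow> le x y \<Longrightarrow> le y z \<Longrightarrow> le x z"
  unfolding forest_def by blast

lemma forest_antisym: "forest Y le \<Longrightarrow> x \<in> Y \<Longrightarrow> y \<in> Y \<Longrightarrow> le x y \<Longrightarrow> le y x \<Longrightarrow> x = y"
  unfolding forest_def by blast

lemma forest_upper_comparable:
  "forest Y le \<Longrightarrow> a \<in> Y \<Longrightarrow> y \<in> Y \<Longrightarrow> z \<in> Y \<Longrightarrow> le a y \<Longrightarrow> le a z \<Longrightarrow> comparable le y z"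
  unfolding forest_def comparable_def by blast

lemma forest_comparable_upper_bounds:
  assumes F: "forest Y le" and "t \<in> Y" "s \<in> Y" "x \<in> Y" "x' \<in> Y"
    and "comparable le t s" "le t x" "le s x'"
  shows "comparable le x x'"
proof -
  from \<open>comparable le t s\<close> consider "le t s" | "le s t" unfolding comparable_def by blast
  then show ?thesis
  proof cases
    case 1
    with assms have "le t x'" using forest_trans[OF F] by blast
    with assms show ?thesis using forest_upper_comparable[OF F] by blast
  next
    case 2
    with assms have "le s x" using forest_trans[OF F] by blast
    with assms show ?thesis using forest_upper_comparable[OF F] by blast
  qed
qed

lemma omax_cases: "omax le a b \<in> {a, b}"
  unfolding omax_def by auto

lemma omax_idem [simp]: "omax le a a = a"
  unfolding omax_def by simp

lemma omax_least: "le a c \<Longrightarrow> le b c \<Longrightarrow> le (omax le a b) c"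
  unfolding omax_def by simp

lemma omax_upper:
  assumes "forest Y le" "a \<in> Y" "b \<in> Y" "comparable le a b"
  shows "le a (omax le a b)" "le b (omax le a b)"
  using assms forest_refl[OF assms(1)] unfolding omax_def comparable_def by auto

lemma omax_eq_left:
  assumes "forest Y le" "a \<in> Y" "b \<in> Y" "le b a"
  shows "omax le a b = a"
  using assms forest_antisym[OF assms(1)] unfolding omax_def by auto

lemma prod_le_refl:
  "forest X1 le1 \<Longrightarrow> forest X2 le2 \<Longrightarrow> x \<in> X1 \<times> X2 \<Longrightarrow> prod_le le1 le2 x x"
  using forest_refl[of X1 le1 "fst x"] forest_refl[of X2 le2 "snd x"]
  unfolding prod_le_def by (simp add: mem_Times_iff)

lemma prod_le_trans:
  assumes "forest X1 le1" "forest X2 le2" "x \<in> X1 \<times> X2" "y \<in> X1 \<times> X2" "z \<in> X1 \<times> X2"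
    and "prod_le le1 le2 x y" "prod_le le1 le2 y z"
  shows "prod_le le1 le2 x z"
  using assms forest_trans[OF assms(1), of "fst x" "fst y" "fst z"]
    forest_trans[OF assms(2), of "snd x" "snd y" "snd z"]
  unfolding prod_le_def by (simp add: mem_Times_iff)

lemma cjoin_least:
  "prod_le le1 le2 t w \<Longrightarrow> prod_le le1 le2 s w \<Longrightarrow> prod_le le1 le2 (cjoin le1 le2 t s) w"
  unfolding prod_le_def cjoin_def by (simp add: omax_least)

lemma cjoin_in_Times: "t \<in> X1 \<times> X2 \<Longrightarrow> s \<in> X1 \<times> X2 \<Longrightarrow> cjoin le1 le2 t s \<in> X1 \<times> X2"
  using omax_cases[of le1 "fst t" "fst s"] omax_cases[of le2 "snd t" "snd s"]
  unfolding cjoin_def by (auto simp: mem_Times_iff)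

lemma c_comparable_upper_bounds:
  assumes F1: "forest X1 le1" and F2: "forest X2 le2"
    and "t \<in> X1 \<times> X2" "s \<in> X1 \<times> X2" "x \<in> X1 \<times> X2" "x' \<in> X1 \<times> X2"
    and "c_comparable le1 le2 t s" "prod_le le1 le2 t x" "prod_le le1 le2 s x'"
  shows "c_comparable le1 le2 x x'"
proof -
  have "comparable le1 (fst x) (fst x')"
    by (rule forest_comparable_upper_bounds[OF F1, of "fst t" "fst s"])
      (use assms in \<open>auto simp: mem_Times_iff c_comparable_def prod_le_def\<close>)
  moreover have "comparable le2 (snd x) (snd x')"
    by (rule forest_comparable_upper_bounds[OF F2, of "snd t" "snd s"])
      (use assms in \<open>auto simp: mem_Times_iff c_comparable_def prod_le_def\<close>)
  ultimately show ?thesis unfolding c_comparable_def ..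
qed

lemma forest_greatest_projection:
  assumes F: "forest Y le" and Y: "\<pi> ` {y, z, y', z'} \<subseteq> Y"
    and "comparable le (\<pi> y) (\<pi> z)" "comparable le (\<pi> y') (\<pi> z')"
    and "comparable le (omax le (\<pi> y) (\<pi> z)) (omax le (\<pi> y') (\<pi> z'))"
  obtains p where "p \<in> {y, z, y', z'}" "\<forall>r\<in>{y, z, y', z'}. le (\<pi> r) (\<pi> p)"
proof -
  define u u' where "u = omax le (\<pi> y) (\<pi> z)" and "u' = omax le (\<pi> y') (\<pi> z')"
  define m where "m = omax le u u'"
  have piY: "\<pi> y \<in> Y" "\<pi> z \<in> Y" "\<pi> y' \<in> Y" "\<pi> z' \<in> Y" using Y by auto
  have u: "u \<in> {\<pi> y, \<pi> z}" "u' \<in> {\<pi> y', \<pi> z'}" "m \<in> {u, u'}"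
    unfolding u_def u'_def m_def by (rule omax_cases)+
  then have uY: "u \<in> Y" "u' \<in> Y" using piY by blast+
  then have mY: "m \<in> Y" using u by blast
  have "m \<in> \<pi> ` {y, z, y', z'}" using u by blast
  then obtain p where p: "p \<in> {y, z, y', z'}" "\<pi> p = m" by blast
  have "le u m" "le u' m"
    using omax_upper[OF F uY assms(5)[folded u_def u'_def]] unfolding m_def by auto
  moreover have "le (\<pi> y) u" "le (\<pi> z) u" "le (\<pi> y') u'" "le (\<pi> z') u'"
    using omax_upper[OF F piY(1,2) assms(3)] omax_upper[OF F piY(3,4) assms(4)]
    unfolding u_def u'_def by auto
  ultimately have "le (\<pi> y) m" "le (\<pi> z) m" "le (\<pi> y') m" "le (\<pi> z') m"
    using forest_trans[OF F _ _ mY] piY uY by blast+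
  with p show thesis using that by blast
qed

lemma cjoins_common_upper_bound:
  assumes F1: "forest X1 le1" and F2: "forest X2 le2" and A: "A \<subseteq> X1 \<times> X2"
    and x: "x \<in> cjoins (X1 \<times> X2) le1 le2 A" and x': "x' \<in> cjoins (X1 \<times> X2) le1 le2 A"
    and xx': "c_comparable le1 le2 x x'"
  obtains w where "w \<in> cjoins (X1 \<times> X2) le1 le2 A"
    and "prod_le le1 le2 x w" and "prod_le le1 le2 x' w"
proof -
  from x obtain y z where yz: "y \<in> A" "z \<in> A" "c_comparable le1 le2 y z" "x = cjoin le1 le2 y z"
    unfolding cjoins_def by blast
  from x' obtain y' z' where yz': "y' \<in> A" "z' \<in> A" "c_comparable le1 le2 y' z'"
      "x' = cjoin le1 le2 y' z'"
    unfolding cjoins_def by blast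
  let ?S = "{y, z, y', z'}"
  have S: "?S \<subseteq> A" using yz yz' by blast
  then have "fst ` ?S \<subseteq> X1" "snd ` ?S \<subseteq> X2" using A by force+
  obtain p where p: "p \<in> ?S" "\<forall>r\<in>?S. le1 (fst r) (fst p)"
    by (rule forest_greatest_projection[OF F1 \<open>fst ` ?S \<subseteq> X1\<close>])
      (use yz(3,4) yz'(3,4) xx' in \<open>auto simp: c_comparable_def cjoin_def\<close>)
  obtain q where q: "q \<in> ?S" "\<forall>r\<in>?S. le2 (snd r) (snd q)"
    by (rule forest_greatest_projection[OF F2 \<open>snd ` ?S \<subseteq> X2\<close>])
      (use yz(3,4) yz'(3,4) xx' in \<open>auto simp: c_comparable_def cjoin_def\<close>)
  have pq: "le1 (fst q) (fst p)" "le2 (snd p) (snd q)" using p q by blast+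
  have pqX: "p \<in> X1 \<times> X2" "q \<in> X1 \<times> X2" using p(1) q(1) S A by blast+
  have w: "cjoin le1 le2 p q = (fst p, snd q)"
    using omax_eq_left[OF F1 _ _ pq(1)] pq(2) pqX unfolding cjoin_def
    by (auto simp: mem_Times_iff omax_def)
  show thesis
  proof (rule that)
    have "c_comparable le1 le2 p q" using pq unfolding c_comparable_def comparable_def by blast
    then show "cjoin le1 le2 p q \<in> cjoins (X1 \<times> X2) le1 le2 A"
      unfolding cjoins_def using cjoin_in_Times[OF pqX] p(1) q(1) S by blast
    show "prod_le le1 le2 x (cjoin le1 le2 p q)" "prod_le le1 le2 x' (cjoin le1 le2 p q)"
      unfolding w prod_le_def using yz(4) yz'(4) p q by (simp_all add: cjoin_def omax_least)
  qed
qed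

lemma concave_lower_closure_cjoins:
  assumes F1: "forest X1 le1" and F2: "forest X2 le2" and A: "A \<subseteq> X1 \<times> X2"
  shows "concave le1 le2 (lower_closure (X1 \<times> X2) le1 le2 (cjoins (X1 \<times> X2) le1 le2 A))"
  unfolding concave_def
proof (intro ballI impI)
  let ?A1 = "cjoins (X1 \<times> X2) le1 le2 A"
  fix t s
  assume t: "t \<in> lower_closure (X1 \<times> X2) le1 le2 ?A1"
    and s: "s \<in> lower_closure (X1 \<times> X2) le1 le2 ?A1"
    and ts: "c_comparable le1 le2 t s"
  from t obtain x where x: "x \<in> ?A1" "prod_le le1 le2 t x" and tX: "t \<in> X1 \<times> X2"
    unfolding lower_closure_def by blast
  from s obtain x' where x': "x' \<in> ?A1" "prod_le le1 le2 s x'" and sX: "s \<in> X1 \<times> X2"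
    unfolding lower_closure_def by blast
  have xX: "x \<in> X1 \<times> X2" "x' \<in> X1 \<times> X2" using x(1) x'(1) unfolding cjoins_def by blast+
  have "c_comparable le1 le2 x x'"
    using c_comparable_upper_bounds[OF F1 F2 tX sX xX ts x(2) x'(2)] .
  then obtain w where w: "w \<in> ?A1" "prod_le le1 le2 x w" "prod_le le1 le2 x' w"
    using cjoins_common_upper_bound[OF F1 F2 A x(1) x'(1)] by blast
  have wX: "w \<in> X1 \<times> X2" using w(1) unfolding cjoins_def by blast
  have "prod_le le1 le2 t w" "prod_le le1 le2 s w"
    using prod_le_trans[OF F1 F2] tX sX xX wX x(2) x'(2) w(2,3) by blast+
  then have "prod_le le1 le2 (cjoin le1 le2 t s) w" by (rule cjoin_least)
  then show "cjoin le1 le2 t s \<in> lower_closure (X1 \<times> X2) le1 le2 ?A1"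
    unfolding lower_closure_def using cjoin_in_Times[OF tX sX] w(1) by blast
qed

lemma hereditary_lower_closure:
  assumes F1: "forest X1 le1" and F2: "forest X2 le2" and "B \<subseteq> X1 \<times> X2"
  shows "hereditary (X1 \<times> X2) le1 le2 (lower_closure (X1 \<times> X2) le1 le2 B)"
  unfolding hereditary_def lower_closure_def
  using prod_le_trans[OF F1 F2] assms(3) by blast

lemma subset_cjoins:
  assumes F1: "forest X1 le1" and F2: "forest X2 le2" and "A \<subseteq> X1 \<times> X2"
  shows "A \<subseteq> cjoins (X1 \<times> X2) le1 le2 A"
proof
  fix x assume x: "x \<in> A"
  with assms(3) have "prod_le le1 le2 x x" using prod_le_refl[OF F1 F2] by blast
  then have "c_comparable le1 le2 x x"
    unfolding c_comparable_def comparable_def prod_le_def by blast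
  moreover have "x = cjoin le1 le2 x x" by (simp add: cjoin_def)
  ultimately show "x \<in> cjoins (X1 \<times> X2) le1 le2 A"
    unfolding cjoins_def using x assms(3) by blast
qed

lemma subset_lower_closure:
  "forest X1 le1 \<Longrightarrow> forest X2 le2 \<Longrightarrow> B \<subseteq> X1 \<times> X2 \<Longrightarrow> B \<subseteq> lower_closure (X1 \<times> X2) le1 le2 B"
  unfolding lower_closure_def using prod_le_refl by blast

lemma cjoins_subset: "concave le1 le2 C \<Longrightarrow> A \<subseteq> C \<Longrightarrow> cjoins X le1 le2 A \<subseteq> C"
  unfolding cjoins_def concave_def by blast

lemma lower_closure_subset:
  "hereditary X le1 le2 C \<Longrightarrow> B \<subseteq> C \<Longrightarrow> lower_closure X le1 le2 B \<subseteq> C"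
  unfolding lower_closure_def hereditary_def by auto

lemma ch_envelope_eqI:
  assumes "hereditary X le1 le2 S" "concave le1 le2 S" "A \<subseteq> S"
    and "\<And>B. hereditary X le1 le2 B \<Longrightarrow> concave le1 le2 B \<Longrightarrow> A \<subseteq> B \<Longrightarrow> S \<subseteq> B"
  shows "ch_envelope X le1 le2 A = S"
proof
  show "ch_envelope X le1 le2 A \<subseteq> S"
    unfolding ch_envelope_def by (rule Inter_lower) (use assms(1-3) in \<open>simp add: hereditary_def\<close>)
  show "S \<subseteq> ch_envelope X le1 le2 A"
    unfolding ch_envelope_def by (rule Inter_greatest) (use assms(4) in simp)
qed

theorem mainTheorem3:
  fixes X1 :: "'a set" and le1 :: "'a \<Rightarrow> 'a \<Rightarrow> bool"
    and X2 :: "'b set" and le2 :: "'b \<Rightarrow> 'b \<Rightarrow> bool"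
    and A :: "('a \<times> 'b) set"
  assumes "forest X1 le1" and "forest X2 le2"
    and "A \<subseteq> X1 \<times> X2"
    and "A1 = {x \<in> X1 \<times> X2. \<exists>y\<in>A. \<exists>z\<in>A. c_comparable le1 le2 y z \<and> x = cjoin le1 le2 y z}"
    and "A2 = {t \<in> X1 \<times> X2. \<exists>x\<in>A1. le1 (fst t) (fst x) \<and> le2 (snd t) (snd x)}"
  shows "A2 = ch_envelope (X1 \<times> X2) le1 le2 A"
proof -
  note F = assms(1,2)
  have A1: "A1 = cjoins (X1 \<times> X2) le1 le2 A" unfolding assms(4) cjoins_def ..
  have A2: "A2 = lower_closure (X1 \<times> X2) le1 le2 A1"
    unfolding assms(5) lower_closure_def prod_le_def ..
  have A1X: "A1 \<subseteq> X1 \<times> X2" unfolding assms(4) by blast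
  show ?thesis
  proof (rule ch_envelope_eqI[symmetric])
    show "hereditary (X1 \<times> X2) le1 le2 A2"
      unfolding A2 using hereditary_lower_closure[OF F A1X] .
    show "concave le1 le2 A2"
      unfolding A2 A1 using concave_lower_closure_cjoins[OF F assms(3)] .
    show "A \<subseteq> A2"
      unfolding A2 using subset_cjoins[OF F assms(3)] subset_lower_closure[OF F A1X] A1 by blast
    show "A2 \<subseteq> B" if "hereditary (X1 \<times> X2) le1 le2 B" "concave le1 le2 B" "A \<subseteq> B" for B
      unfolding A2 A1 using that by (intro lower_closure_subset cjoins_subset)
  qed
qed

end
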